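(* Let $\Phi=(V,Q,\mathcal{C})$ be a CSP formula with atomic constraints and $h=(h_v)_{v\in V}$ a projection scheme satisfying the entropy criterion with parameters $0<\beta<\alpha<1$. Let $D$ be the maximum degree of the dependency graph of $\Phi$ and $q_v=|Q_v|$, $s_v=|\Sigma_v|$. Suppose that for every $c\in\mathcal{C}$, $\sum_{v\in\mathrm{vbl}(c)}\log q_v\ge\frac1\beta\log(40\mathrm{e}D^2)$. Then for any variable $u\in V$, any $\tau\in\bigotimes_{v\in V\setminus\{u\}}\Sigma_v$ and any $y\in\Sigma_u$, $$\nu_u^{\tau}(y)\le\frac{1}{q_u}\Big\lceil\frac{q_u}{s_u}\Big\rceil\exp\Big(\frac1{20D}\Big).$$
   Context: A CSP formula: variables $V$ with finite domains $Q_v$ ($|Q_v|\ge2$), constraints $c$ on $\mathrm{vbl}(c)\subseteq V$; atomic means violated by exactly one configuration of its variables. Dependency graph: vertices $\mathcal{C}$, adjacency iff variable sets intersect. $\mu$: uniform distribution over satisfying assignments. Projection scheme: $h_v:Q_v\to\Sigma_v$. Entropy criterion with $(\alpha,\beta)$: $\lfloor q_v/s_v\rfloor\le|h_v^{-1}(y)|\le\lceil q_v/s_v\rceil$ for all $v,y$; and for each $c$: $\sum_{v\in\mathrm{vbl}(c)}\log\lceil q_v/s_v\rceil\le\alpha\sum_{v\in\mathrm{vbl}(c)}\log q_v$, $\sum_{v\in\mathrm{vbl}(c)}\log\lfloor q_v/s_v\rfloor\ge\beta\sum_{v\in\mathrm{vbl}(c)}\log q_v$. $\nu$ is the distribution of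 $(h_v(X_v))_v$ for $X\sim\mu$, and $\nu_u^\tau$ denotes the marginal distribution at $u$ of $\nu$ conditioned on the values at $V\setminus\{u\}$ being $\tau$. $\log$ is base 2. *)

theory Defs
  imports "HOL-Probability.Probability"
begin

text \<open>A CSP formula: variables V, domains Q v, constraint indices C, each constraint c
  has a variable set vbl c and a predicate sat c on assignments of vbl c
  (functions in PiE (vbl c) Q).\<close>

definition csp_formula :: "'v set \<Rightarrow> ('v \<Rightarrow> 'a set) \<Rightarrow> 'c set \<Rightarrow> ('c \<Rightarrow> 'v set) \<Rightarrow> bool" where
  "csp_formula V Q C vbl \<longleftrightarrow> finite V \<and> finite C \<and>
     (\<forall>v\<in>V. finite (Q v) \<and> card (Q v) \<ge> 2) \<and> (\<forall>c\<in>C. vbl c \<subseteq> V)"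

definition atomic_constraint ::
  "('v \<Rightarrow> 'a set) \<Rightarrow> 'v set \<Rightarrow> (('v \<Rightarrow> 'a) \<Rightarrow> bool) \<Rightarrow> bool" where
  "atomic_constraint Q S P \<longleftrightarrow> (\<exists>!\<sigma>. \<sigma> \<in> PiE S Q \<and> \<not> P \<sigma>)"

definition sat_assignments ::
  "'v set \<Rightarrow> ('v \<Rightarrow> 'a set) \<Rightarrow> 'c set \<Rightarrow> ('c \<Rightarrow> 'v set) \<Rightarrow> ('c \<Rightarrow> ('v \<Rightarrow> 'a) \<Rightarrow> bool)
     \<Rightarrow> ('v \<Rightarrow> 'a) set" where
  "sat_assignments V Q C vbl sat = {X \<in> PiE V Q. \<forall>c\<in>C. sat c (restrict X (vbl c))}"

definition csp_mu ::
  "'v set \<Rightarrow> ('v \<Rightarrow> 'a set) \<Rightarrow> 'c set \<Rightarrow> ('c \<Rightarrow> 'v set) \<Rightarrow> ('c \<Rightarrow> ('v \<Rightarrow> 'a) \<Rightarrow> bool)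
     \<Rightarrow> ('v \<Rightarrow> 'a) pmf" where
  "csp_mu V Q C vbl sat = pmf_of_set (sat_assignments V Q C vbl sat)"

definition proj_nu :: "'v set \<Rightarrow> ('v \<Rightarrow> 'a \<Rightarrow> 'b) \<Rightarrow> ('v \<Rightarrow> 'a) pmf \<Rightarrow> ('v \<Rightarrow> 'b) pmf" where
  "proj_nu V h \<mu> = map_pmf (\<lambda>X. restrict (\<lambda>v. h v (X v)) V) \<mu>"

definition cond_event :: "'v set \<Rightarrow> 'v \<Rightarrow> ('v \<Rightarrow> 'b) \<Rightarrow> ('v \<Rightarrow> 'b) set" where
  "cond_event V u \<tau> = {\<sigma>. \<forall>v\<in>V - {u}. \<sigma> v = \<tau> v}"

definition cond_marginal :: "'v set \<Rightarrow> ('v \<Rightarrow> 'b) pmf \<Rightarrow> 'v \<Rightarrow> ('v \<Rightarrow> 'b) \<Rightarrow> 'b pmf" where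
  "cond_marginal V \<nu> u \<tau> = map_pmf (\<lambda>\<sigma>. \<sigma> u) (cond_pmf \<nu> (cond_event V u \<tau>))"

definition dep_degree :: "'c set \<Rightarrow> ('c \<Rightarrow> 'v set) \<Rightarrow> 'c \<Rightarrow> nat" where
  "dep_degree C vbl c = card {c' \<in> C. c' \<noteq> c \<and> vbl c \<inter> vbl c' \<noteq> {}}"

definition max_dep_degree :: "'c set \<Rightarrow> ('c \<Rightarrow> 'v set) \<Rightarrow> nat" where
  "max_dep_degree C vbl = (if C = {} then 0 else Max (dep_degree C vbl ` C))"

definition projection_scheme :: "'v set \<Rightarrow> ('v \<Rightarrow> 'a set) \<Rightarrow> ('v \<Rightarrow> 'b set) \<Rightarrow> ('v \<Rightarrow> 'a \<Rightarrow> 'b) \<Rightarrow> bool" where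
  "projection_scheme V Q \<Sigma> h \<longleftrightarrow> (\<forall>v\<in>V. finite (\<Sigma> v) \<and> (\<forall>x\<in>Q v. h v x \<in> \<Sigma> v))"

definition entropy_criterion ::
  "'v set \<Rightarrow> ('v \<Rightarrow> 'a set) \<Rightarrow> 'c set \<Rightarrow> ('c \<Rightarrow> 'v set) \<Rightarrow> ('v \<Rightarrow> 'b set) \<Rightarrow> ('v \<Rightarrow> 'a \<Rightarrow> 'b)
     \<Rightarrow> real \<Rightarrow> real \<Rightarrow> bool" where
  "entropy_criterion V Q C vbl \<Sigma> h \<alpha> \<beta> \<longleftrightarrow>
     (\<forall>v\<in>V. \<forall>y\<in>\<Sigma> v.
        \<lfloor>real (card (Q v)) / real (card (\<Sigma> v))\<rfloor> \<le> int (card {x \<in> Q v. h v x = y}) \<and>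
        int (card {x \<in> Q v. h v x = y}) \<le> \<lceil>real (card (Q v)) / real (card (\<Sigma> v))\<rceil>) \<and>
     (\<forall>c\<in>C.
        (\<Sum>v\<in>vbl c. log 2 (real_of_int \<lceil>real (card (Q v)) / real (card (\<Sigma> v))\<rceil>))
          \<le> \<alpha> * (\<Sum>v\<in>vbl c. log 2 (real (card (Q v)))) \<and>
        (\<Sum>v\<in>vbl c. log 2 (real_of_int \<lfloor>real (card (Q v)) / real (card (\<Sigma> v))\<rfloor>))
          \<ge> \<beta> * (\<Sum>v\<in>vbl c. log 2 (real (card (Q v)))))"

end

theory Submission
  imports Defs
begin

text \<open>Conditioning \<open>\<nu>\<close> on \<open>\<tau>\<close> amounts to drawing a uniform satisfying assignment in which every
  \<open>v \<noteq> u\<close> is pinned to the fibre \<open>h\<^sub>v\<^sup>-\<^sup>1(\<tau> v)\<close>: an atomic CSP on the product of the fibres, in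
  which each constraint is violated by one of at least \<open>40 e D\<^sup>2\<close> configurations of its variables
  (entropy criterion). Without the at most \<open>D + 1\<close> constraints containing \<open>u\<close> the value \<open>X\<^sub>u\<close>
  is uniform on \<open>Q\<^sub>u\<close>, so \<open>y\<close> has probability \<open>|h\<^sub>u\<^sup>-\<^sup>1(y)|/q\<^sub>u \<le> \<lceil>q\<^sub>u/s\<^sub>u\<rceil>/q\<^sub>u\<close>; by a counting
  version of the lopsided local lemma, adding those constraints back removes at most a fraction
  \<open>2p(D + 1)\<close> of the assignments, with \<open>p = 1/(40 e D\<^sup>2)\<close>, and \<open>1/(1 - 2p(D + 1)) \<le> exp (1/(20D))\<close>.\<close>

lemma atomic_constraint_iff_forbidden:
  "atomic_constraint Q S P \<longleftrightarrow> (\<exists>\<sigma>\<in>PiE S Q. \<forall>s\<in>PiE S Q. P s \<longleftrightarrow> s \<noteq> \<sigma>)"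
proof
  assume "atomic_constraint Q S P"
  then obtain \<sigma> where "\<sigma> \<in> PiE S Q" "\<not> P \<sigma>" "\<And>s. s \<in> PiE S Q \<Longrightarrow> \<not> P s \<Longrightarrow> s = \<sigma>"
    unfolding atomic_constraint_def by auto
  then show "\<exists>\<sigma>\<in>PiE S Q. \<forall>s\<in>PiE S Q. P s \<longleftrightarrow> s \<noteq> \<sigma>"
    by blast
next
  assume "\<exists>\<sigma>\<in>PiE S Q. \<forall>s\<in>PiE S Q. P s \<longleftrightarrow> s \<noteq> \<sigma>"
  then show "atomic_constraint Q S P"
    unfolding atomic_constraint_def by auto
qed

locale atomic_product_space =
  fixes V :: "'v set" and Dm :: "'v \<Rightarrow> 'a set" and C :: "'c set"
    and vbl :: "'c \<Rightarrow> 'v set" and forbidden :: "'c \<Rightarrow> 'v \<Rightarrow> 'a"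
  assumes finite_vars: "finite V" and finite_domains: "v \<in> V \<Longrightarrow> finite (Dm v)"
    and finite_constraints: "finite C" and vbl_subset: "c \<in> C \<Longrightarrow> vbl c \<subseteq> V"
begin

definition violates :: "'c \<Rightarrow> ('v \<Rightarrow> 'a) \<Rightarrow> bool" where
  "violates c X \<longleftrightarrow> restrict X (vbl c) = forbidden c"

definition avoiding :: "'c set \<Rightarrow> ('v \<Rightarrow> 'a) set" where
  "avoiding T = {X \<in> PiE V Dm. \<forall>c\<in>T. \<not> violates c X}"

lemma finite_avoiding [simp]: "finite (avoiding T)"
proof -
  have "finite (PiE V Dm)"
    using finite_vars finite_domains by (intro finite_PiE) auto
  then show ?thesis
    unfolding avoiding_def by simp
qed

lemma avoiding_antimono: "T \<subseteq> S \<Longrightarrow> avoiding S \<subseteq> avoiding T"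
  unfolding avoiding_def by auto

lemma card_avoiding_pinned_le:
  assumes "W \<subseteq> V" and untouched: "\<forall>c\<in>T. vbl c \<inter> W = {}"
    and "a \<in> PiE W Dm" and a': "a' \<in> PiE W Dm"
  shows "card {X \<in> avoiding T. restrict X W = a} \<le> card {X \<in> avoiding T. restrict X W = a'}"
proof -
  define repin where "repin X = (\<lambda>v. if v \<in> W then a' v else X v)" for X :: "'v \<Rightarrow> 'a"
  have restrict_repin: "restrict (repin X) W = a'" for X
    using a' unfolding repin_def by (auto simp: PiE_iff extensional_def)
  have repin_PiE: "repin X \<in> PiE V Dm" if "X \<in> PiE V Dm" for X
    using that a' \<open>W \<subseteq> V\<close> unfolding repin_def by (auto simp: PiE_iff extensional_def)
  have "violates c (repin X) \<longleftrightarrow> violates c X" if "c \<in> T" for c X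
  proof -
    have "restrict (repin X) (vbl c) = restrict X (vbl c)"
      using untouched that unfolding repin_def by (intro restrict_ext) auto
    then show ?thesis
      unfolding violates_def by simp
  qed
  then have "repin ` {X \<in> avoiding T. restrict X W = a} \<subseteq> {X \<in> avoiding T. restrict X W = a'}"
    using repin_PiE restrict_repin unfolding avoiding_def by blast
  moreover have "inj_on repin {X \<in> avoiding T. restrict X W = a}"
  proof (rule inj_onI, rule ext)
    fix X Y v
    assume X: "X \<in> {X \<in> avoiding T. restrict X W = a}" and Y: "Y \<in> {X \<in> avoiding T. restrict X W = a}"
      and "repin X = repin Y"
    then have "X v = Y v" if "v \<notin> W"
      using that unfolding repin_def by (metis (mono_tags))
    moreover have "X v = Y v" if "v \<in> W"
      using X Y that by (metis (mono_tags, lifting) mem_Collect_eq restrict_apply')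
    ultimately show "X v = Y v"
      by blast
  qed
  ultimately show ?thesis
    by (intro card_inj_on_le) auto
qed

lemma card_avoiding_pinned_mult_le:
  assumes W: "W \<subseteq> V" and untouched: "\<forall>c\<in>T. vbl c \<inter> W = {}" and a: "a \<in> PiE W Dm"
  shows "card {X \<in> avoiding T. restrict X W = a} * card (PiE W Dm) \<le> card (avoiding T)"
proof -
  have finite_W: "finite (PiE W Dm)"
    using W finite_vars finite_domains by (intro finite_PiE) (auto intro: finite_subset)
  have "restrict X W \<in> PiE W Dm" if "X \<in> avoiding T" for X
  proof -
    have "X \<in> PiE V Dm"
      using that by (simp add: avoiding_def)
    then show ?thesis
      using W by (simp add: restrict_PiE_iff PiE_iff subset_iff)
  qed
  then have partition: "avoiding T = (\<Union>a'\<in>PiE W Dm. {X \<in> avoiding T. restrict X W = a'})"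
    by blast
  have "card {X \<in> avoiding T. restrict X W = a} * card (PiE W Dm)
      = (\<Sum>a'\<in>PiE W Dm. card {X \<in> avoiding T. restrict X W = a})"
    by simp
  also have "\<dots> \<le> (\<Sum>a'\<in>PiE W Dm. card {X \<in> avoiding T. restrict X W = a'})"
    by (rule sum_mono, rule card_avoiding_pinned_le[OF W untouched a])
  also have "\<dots> = card (\<Union>a'\<in>PiE W Dm. {X \<in> avoiding T. restrict X W = a'})"
    by (rule card_UN_disjoint[symmetric]) (auto simp: finite_W)
  also have "\<dots> = card (avoiding T)"
    using partition by simp
  finally show ?thesis .
qed

lemma card_violating_mult_le:
  assumes c: "c \<in> C" and untouched: "\<forall>j\<in>T. vbl j \<inter> vbl c = {}"
  shows "card {X \<in> avoiding T. violates c X} * card (PiE (vbl c) Dm) \<le> card (avoiding T)"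
proof (cases "forbidden c \<in> PiE (vbl c) Dm")
  case True
  then show ?thesis
    using card_avoiding_pinned_mult_le[OF vbl_subset[OF c] untouched] by (simp add: violates_def)
next
  case False
  have "\<not> violates c X" if "X \<in> avoiding T" for X
  proof
    assume "violates c X"
    then have "forbidden c = restrict X (vbl c)"
      by (simp add: violates_def)
    moreover have "X \<in> PiE V Dm"
      using that by (simp add: avoiding_def)
    ultimately have "forbidden c \<in> PiE (vbl c) Dm"
      using vbl_subset[OF c] by (simp add: restrict_PiE_iff PiE_iff subset_iff)
    with False show False ..
  qed
  then have "{X \<in> avoiding T. violates c X} = {}"
    by blast
  then show ?thesis
    by (simp only: card.empty mult_0 le0)
qed

lemma card_avoiding_value_mult_le:
  assumes u: "u \<in> V" and untouched: "\<forall>c\<in>T. u \<notin> vbl c" and x: "x \<in> Dm u"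
  shows "card {X \<in> avoiding T. X u = x} * card (Dm u) \<le> card (avoiding T)"
proof -
  have "restrict X {u} = restrict (\<lambda>_. x) {u} \<longleftrightarrow> X u = x" for X :: "'v \<Rightarrow> 'a"
    by (simp add: fun_eq_iff)
  then have "{X \<in> avoiding T. X u = x} = {X \<in> avoiding T. restrict X {u} = restrict (\<lambda>_. x) {u}}"
    by blast
  moreover have "card (PiE {u} Dm) = card (Dm u)"
    by (simp add: card_PiE)
  moreover have "card {X \<in> avoiding T. restrict X {u} = restrict (\<lambda>_. x) {u}} * card (PiE {u} Dm)
      \<le> card (avoiding T)"
    using u untouched x by (intro card_avoiding_pinned_mult_le) auto
  ultimately show ?thesis
    by simp
qed

lemma card_avoiding_value_in_mult_le:
  assumes u: "u \<in> V" and untouched: "\<forall>c\<in>T. u \<notin> vbl c" and "Y \<subseteq> Dm u"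
  shows "card {X \<in> avoiding T. X u \<in> Y} * card (Dm u) \<le> card Y * card (avoiding T)"
proof -
  have "finite Y"
    using \<open>Y \<subseteq> Dm u\<close> finite_domains[OF u] by (rule finite_subset)
  have "card {X \<in> avoiding T. X u \<in> Y} = card (\<Union>x\<in>Y. {X \<in> avoiding T. X u = x})"
    by (rule arg_cong[where f = card]) blast
  also have "\<dots> = (\<Sum>x\<in>Y. card {X \<in> avoiding T. X u = x})"
    by (rule card_UN_disjoint) (auto simp: \<open>finite Y\<close>)
  finally have "card {X \<in> avoiding T. X u \<in> Y} * card (Dm u)
      = (\<Sum>x\<in>Y. card {X \<in> avoiding T. X u = x} * card (Dm u))"
    by (simp add: sum_distrib_right)
  also have "\<dots> \<le> (\<Sum>x\<in>Y. card (avoiding T))"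
    using u untouched \<open>Y \<subseteq> Dm u\<close> by (intro sum_mono card_avoiding_value_mult_le) auto
  finally show ?thesis
    by simp
qed

lemma card_avoiding_union_bound:
  assumes "T \<subseteq> S" and "finite S"
  shows "card (avoiding T) \<le> card (avoiding S) + (\<Sum>c\<in>S - T. card {X \<in> avoiding T. violates c X})"
proof -
  have "avoiding T \<subseteq> avoiding S \<union> (\<Union>c\<in>S - T. {X \<in> avoiding T. violates c X})"
    using \<open>T \<subseteq> S\<close> unfolding avoiding_def by blast
  then have "card (avoiding T) \<le> card (avoiding S \<union> (\<Union>c\<in>S - T. {X \<in> avoiding T. violates c X}))"
    using \<open>finite S\<close> by (intro card_mono finite_UnI finite_UN_I) auto
  also have "\<dots> \<le> card (avoiding S) + card (\<Union>c\<in>S - T. {X \<in> avoiding T. violates c X})"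
    by (rule card_Un_le)
  also have "card (\<Union>c\<in>S - T. {X \<in> avoiding T. violates c X})
      \<le> (\<Sum>c\<in>S - T. card {X \<in> avoiding T. violates c X})"
    by (rule card_UN_le) (use \<open>finite S\<close> in auto)
  finally show ?thesis
    by simp
qed
end

locale atomic_lll = atomic_product_space +
  fixes p :: real and D :: nat
  assumes dep_degree_le: "c \<in> C \<Longrightarrow> dep_degree C vbl c \<le> D"
    and p_nonneg: "0 \<le> p"
    and forbidden_unlikely: "c \<in> C \<Longrightarrow> 1 \<le> p * card (PiE (vbl c) Dm)"
    and p_degree: "4 * p * D \<le> 1"
begin

lemma card_violating_le_independent:
  assumes c: "c \<in> C" and untouched: "\<forall>j\<in>T. vbl j \<inter> vbl c = {}"
  shows "real (card {X \<in> avoiding T. violates c X}) \<le> p * card (avoiding T)"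
proof -
  let ?N = "real (card {X \<in> avoiding T. violates c X})"
  have "?N = ?N * 1"
    by simp
  also have "\<dots> \<le> ?N * (p * card (PiE (vbl c) Dm))"
    using forbidden_unlikely[OF c] by (intro mult_left_mono) auto
  also have "\<dots> = p * (?N * card (PiE (vbl c) Dm))"
    by simp
  also have "\<dots> \<le> p * card (avoiding T)"
    using card_violating_mult_le[OF c untouched] p_nonneg
    by (intro mult_left_mono) (simp_all flip: of_nat_mult)
  finally show ?thesis .
qed

lemma card_avoiding_shrink:
  fixes k :: real
  assumes "T \<subseteq> S" and "S \<subseteq> C" and "card (S - T) \<le> k"
    and violating: "\<And>c. c \<in> S - T \<Longrightarrow> real (card {X \<in> avoiding T. violates c X}) \<le> 2 * p * card (avoiding T)"
  shows "real (card (avoiding T)) * (1 - 2 * p * k) \<le> card (avoiding S)"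
proof -
  have "finite S"
    using \<open>S \<subseteq> C\<close> finite_constraints by (rule finite_subset)
  then have "real (card (avoiding T))
      \<le> card (avoiding S) + (\<Sum>c\<in>S - T. real (card {X \<in> avoiding T. violates c X}))"
    using card_avoiding_union_bound[OF \<open>T \<subseteq> S\<close>] by (simp flip: of_nat_add of_nat_sum)
  also have "(\<Sum>c\<in>S - T. real (card {X \<in> avoiding T. violates c X}))
      \<le> (\<Sum>c\<in>S - T. 2 * p * card (avoiding T))"
    using violating by (rule sum_mono)
  also have "\<dots> = card (S - T) * (2 * p * card (avoiding T))"
    by simp
  also have "\<dots> \<le> k * (2 * p * card (avoiding T))"
    using \<open>card (S - T) \<le> k\<close> p_nonneg by (intro mult_right_mono) auto
  finally show ?thesis
    by (simp add: algebra_simps)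
qed

text \<open>The lopsided local lemma, by induction on the number of avoided constraints: dropping the
  at most \<open>D\<close> constraints of \<open>S\<close> that share a variable with \<open>c\<close> at most halves the number of
  avoiding assignments, and the remaining ones are independent of \<open>c\<close>.\<close>
lemma card_violating_le:
  assumes "S \<subseteq> C" and "c \<in> C - S"
  shows "real (card {X \<in> avoiding S. violates c X}) \<le> 2 * p * card (avoiding S)"
  using assms
proof (induction "card S" arbitrary: S c rule: less_induct)
  case less
  define T where "T = {j \<in> S. vbl j \<inter> vbl c = {}}"
  have "T \<subseteq> S"
    by (auto simp: T_def)
  have "card {X \<in> avoiding S. violates c X} \<le> card {X \<in> avoiding T. violates c X}"
    using avoiding_antimono[OF \<open>T \<subseteq> S\<close>] by (intro card_mono) auto
  then have "real (card {X \<in> avoiding S. violates c X}) \<le> card {X \<in> avoiding T. violates c X}"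
    by simp
  also have "\<dots> \<le> p * card (avoiding T)"
    using less.prems by (intro card_violating_le_independent) (auto simp: T_def)
  also have "\<dots> \<le> 2 * p * card (avoiding S)"
  proof (cases "T = S")
    case True
    then show ?thesis
      using p_nonneg by simp
  next
    case False
    have "finite S"
      using less.prems(1) finite_constraints by (rule finite_subset)
    with False \<open>T \<subseteq> S\<close> have "card T < card S"
      by (intro psubset_card_mono) auto
    have "T \<subseteq> C"
      using \<open>T \<subseteq> S\<close> less.prems(1) by (rule order_trans)
    then have "real (card {X \<in> avoiding T. violates j X}) \<le> 2 * p * card (avoiding T)"
      if "j \<in> S - T" for j
      using less.hyps[OF \<open>card T < card S\<close>] less.prems(1) that by auto
    moreover have "card (S - T) \<le> D"
    proof -
      have "S - T \<subseteq> {c' \<in> C. c' \<noteq> c \<and> vbl c \<inter> vbl c' \<noteq> {}}"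
        using less.prems by (auto simp: T_def)
      then have "card (S - T) \<le> dep_degree C vbl c"
        unfolding dep_degree_def using finite_constraints by (intro card_mono) auto
      with dep_degree_le less.prems(2) show ?thesis
        by (meson DiffD1 order_trans)
    qed
    ultimately have "real (card (avoiding T)) * (1 - 2 * p * D) \<le> card (avoiding S)"
      using \<open>T \<subseteq> S\<close> less.prems(1) by (intro card_avoiding_shrink) auto
    moreover have "real (card (avoiding T)) * (1 / 2) \<le> real (card (avoiding T)) * (1 - 2 * p * D)"
      using p_degree by (intro mult_left_mono) auto
    ultimately have "real (card (avoiding T)) \<le> 2 * card (avoiding S)"
      by linarith
    then have "p * card (avoiding T) \<le> p * (2 * card (avoiding S))"
      using p_nonneg by (rule mult_left_mono)
    then show ?thesis
      by (simp add: mult.left_commute)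
  qed
  finally show ?case .
qed

lemma card_constraints_containing_le: "card {c \<in> C. u \<in> vbl c} \<le> D + 1"
proof (cases "{c \<in> C. u \<in> vbl c} = {}")
  case True
  then show ?thesis
    by (simp only: card.empty le0)
next
  case False
  then obtain c where c: "c \<in> C" "u \<in> vbl c"
    by blast
  have "{c' \<in> C. u \<in> vbl c'} \<subseteq> insert c {c' \<in> C. c' \<noteq> c \<and> vbl c \<inter> vbl c' \<noteq> {}}"
    using c by auto
  then have "card {c' \<in> C. u \<in> vbl c'} \<le> card (insert c {c' \<in> C. c' \<noteq> c \<and> vbl c \<inter> vbl c' \<noteq> {}})"
    using finite_constraints by (intro card_mono) auto
  also have "\<dots> \<le> dep_degree C vbl c + 1"
    unfolding dep_degree_def using card_insert_le_m1 finite_constraints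
    by (simp add: card_insert_if)
  finally show ?thesis
    using dep_degree_le[OF c(1)] by simp
qed

lemma avoiding_value_ratio_le:
  assumes u: "u \<in> V" and "Y \<subseteq> Dm u" and small: "2 * p * (real D + 1) < 1" and "avoiding C \<noteq> {}"
  shows "card {X \<in> avoiding C. X u \<in> Y} / card (avoiding C)
    \<le> card Y / card (Dm u) / (1 - 2 * p * (real D + 1))"
proof -
  define S where "S = {c \<in> C. u \<notin> vbl c}"
  have "card {X \<in> avoiding C. X u \<in> Y} * card (Dm u) \<le> card {X \<in> avoiding S. X u \<in> Y} * card (Dm u)"
    using avoiding_antimono[of S C] by (intro mult_le_mono1 card_mono) (auto simp: S_def)
  also have "\<dots> \<le> card Y * card (avoiding S)"
    by (rule card_avoiding_value_in_mult_le[OF u _ \<open>Y \<subseteq> Dm u\<close>]) (simp add: S_def)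
  finally have count: "real (card {X \<in> avoiding C. X u \<in> Y}) * card (Dm u) \<le> card Y * card (avoiding S)"
    by (simp flip: of_nat_mult)
  have shrink: "real (card (avoiding S)) * (1 - 2 * p * (real D + 1)) \<le> card (avoiding C)"
  proof (rule card_avoiding_shrink)
    have "C - S = {c \<in> C. u \<in> vbl c}"
      unfolding S_def by blast
    then show "card (C - S) \<le> real D + 1"
      using card_constraints_containing_le[of u] by simp
    show "real (card {X \<in> avoiding S. violates c X}) \<le> 2 * p * card (avoiding S)" if "c \<in> C - S" for c
      using that by (intro card_violating_le) (auto simp: S_def)
  qed (auto simp: S_def)
  have "real (card {X \<in> avoiding C. X u \<in> Y}) * card (Dm u) * (1 - 2 * p * (real D + 1))
      \<le> card Y * card (avoiding S) * (1 - 2 * p * (real D + 1))"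
    using count small by (intro mult_right_mono) auto
  also have "\<dots> \<le> card Y * card (avoiding C)"
    using shrink by (simp add: mult.assoc mult_left_mono)
  finally have "real (card {X \<in> avoiding C. X u \<in> Y}) * card (Dm u) * (1 - 2 * p * (real D + 1))
      \<le> card Y * card (avoiding C)" .
  moreover have "0 < card (avoiding C)"
    using \<open>avoiding C \<noteq> {}\<close> by (simp add: card_gt_0_iff)
  moreover have "0 < card (Dm u)"
  proof -
    obtain X where "X \<in> PiE V Dm"
      using \<open>avoiding C \<noteq> {}\<close> by (auto simp: avoiding_def)
    then have "X u \<in> Dm u"
      using u by (rule PiE_mem)
    then show ?thesis
      using finite_domains[OF u] by (auto simp: card_gt_0_iff)
  qed
  moreover have "N / G \<le> Y / q / d"
    if "0 < G" "0 < q" "0 < d" "N * q * d \<le> Y * G" for N q d Y G :: real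
    using that by (simp add: divide_simps mult.commute mult.left_commute)
  ultimately show ?thesis
    using small by simp
qed

end

lemma lll_parameter_bounds:
  fixes D :: nat and p :: real
  assumes "1 \<le> D"
  defines "p \<equiv> 1 / (40 * exp 1 * real D ^ 2)"
  shows "4 * p * D \<le> 1" and "2 * p * (real D + 1) < 1" and "1 / (1 - 2 * p * (real D + 1)) \<le> exp (1 / (20 * real D))"
proof -
  define x where "x = 1 / (20 * real D)"
  have x: "0 < x" "x \<le> 1 / 20"
    using \<open>1 \<le> D\<close> by (auto simp: x_def field_simps)
  have "50 * real D * (D + 1) \<le> 50 * real D * (2 * D)"
    using \<open>1 \<le> D\<close> by (intro mult_left_mono) auto
  also have "\<dots> = 40 * (5 / 2) * real D ^ 2"
    by (simp add: power2_eq_square)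
  also have "\<dots> \<le> 40 * exp 1 * real D ^ 2"
    using exp_lower_Taylor_quadratic[of 1] by (intro mult_right_mono) auto
  finally have denominator: "50 * real D * (D + 1) \<le> 40 * exp 1 * real D ^ 2" .
  moreover have "4 * real D * 1 \<le> 50 * real D * (D + 1)"
    by (intro mult_mono) auto
  ultimately have "4 * real D \<le> 40 * exp 1 * real D ^ 2"
    by linarith
  then show "4 * p * D \<le> 1"
    using \<open>1 \<le> D\<close> by (simp add: p_def field_simps)
  from denominator have slack: "2 * p * (real D + 1) \<le> 4 / 5 * x"
    using \<open>1 \<le> D\<close> by (simp add: p_def x_def field_simps)
  with x show pos: "2 * p * (real D + 1) < 1"
    by simp
  have "x * x \<le> x * (1 / 20)"
    using x by (intro mult_left_mono) auto
  then have "1 \<le> (1 - 4 / 5 * x) * (1 + x)"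
    using x by (simp add: algebra_simps)
  also have "\<dots> \<le> (1 - 2 * p * (real D + 1)) * exp x"
    using slack x by (intro mult_mono exp_ge_add_one_self) auto
  finally have "1 / (1 - 2 * p * (real D + 1)) \<le> exp x"
    using pos by (simp add: pos_divide_le_eq mult.commute)
  then show "1 / (1 - 2 * p * (real D + 1)) \<le> exp (1 / (20 * real D))"
    by (simp add: x_def)
qed

lemma cond_pmf_of_set:
  assumes "finite S" and "S \<inter> A \<noteq> {}"
  shows "cond_pmf (pmf_of_set S) A = pmf_of_set (S \<inter> A)"
proof (rule pmf_eqI)
  fix x
  have "S \<noteq> {}"
    using assms(2) by auto
  then have "set_pmf (pmf_of_set S) \<inter> A \<noteq> {}"
    using assms by simp
  from pmf_cond[OF this, of x] show "pmf (cond_pmf (pmf_of_set S) A) x = pmf (pmf_of_set (S \<inter> A)) x"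
    using assms \<open>S \<noteq> {}\<close> by (auto simp: measure_pmf_of_set indicator_def Int_commute)
qed

lemma pinned_nonempty_if_feasible:
  assumes "finite S" and "S \<noteq> {}"
    and "cond_event V u \<tau> \<inter> set_pmf (proj_nu V h (pmf_of_set S)) \<noteq> {}"
  shows "{X \<in> S. \<forall>v\<in>V - {u}. h v (X v) = \<tau> v} \<noteq> {}"
proof -
  obtain X where "X \<in> S" and "restrict (\<lambda>v. h v (X v)) V \<in> cond_event V u \<tau>"
    using assms by (auto simp: proj_nu_def)
  then show ?thesis
    by (auto simp: cond_event_def)
qed

lemma pmf_cond_marginal_proj_nu_uniform:
  fixes h :: "'v \<Rightarrow> 'a \<Rightarrow> 'b" and \<tau> :: "'v \<Rightarrow> 'b"
  assumes "finite S" and "u \<in> V"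
  defines "F \<equiv> {X \<in> S. \<forall>v\<in>V - {u}. h v (X v) = \<tau> v}"
  assumes "F \<noteq> {}"
  shows "pmf (cond_marginal V (proj_nu V h (pmf_of_set S)) u \<tau>) y
    = card {X \<in> F. h u (X u) = y} / card F"
proof -
  define g where "g = (\<lambda>X. restrict (\<lambda>v. h v (X v)) V)"
  have F_eq: "S \<inter> g -` cond_event V u \<tau> = F"
    by (auto simp: F_def g_def cond_event_def)
  have "S \<noteq> {}"
    using \<open>F \<noteq> {}\<close> by (auto simp: F_def)
  then have "set_pmf (pmf_of_set S) \<inter> g -` cond_event V u \<tau> \<noteq> {}"
    using \<open>finite S\<close> \<open>F \<noteq> {}\<close> F_eq by auto
  then have "cond_pmf (map_pmf g (pmf_of_set S)) (cond_event V u \<tau>) = map_pmf g (pmf_of_set F)"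
    using assms F_eq by (simp add: cond_map_pmf cond_pmf_of_set)
  moreover have "proj_nu V h (pmf_of_set S) = map_pmf g (pmf_of_set S)"
    by (simp add: proj_nu_def g_def)
  ultimately have "cond_marginal V (proj_nu V h (pmf_of_set S)) u \<tau> = map_pmf (\<lambda>X. h u (X u)) (pmf_of_set F)"
    using \<open>u \<in> V\<close> by (simp add: cond_marginal_def pmf.map_comp o_def g_def)
  moreover have "finite F"
    using \<open>finite S\<close> by (simp add: F_def)
  ultimately show ?thesis
    using \<open>F \<noteq> {}\<close> by (simp add: pmf_map measure_pmf_of_set Int_def conj_commute)
qed

definition fibre_domain :: "'v \<Rightarrow> ('v \<Rightarrow> 'a set) \<Rightarrow> ('v \<Rightarrow> 'a \<Rightarrow> 'b) \<Rightarrow> ('v \<Rightarrow> 'b) \<Rightarrow> 'v \<Rightarrow> 'a set" where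
  "fibre_domain u Q h \<tau> v = (if v = u then Q u else {x \<in> Q v. h v x = \<tau> v})"

lemma pinned_sat_assignments_eq:
  assumes vbl: "\<forall>c\<in>C. vbl c \<subseteq> V" and forbidden: "\<forall>c\<in>C. \<forall>s\<in>PiE (vbl c) Q. sat c s \<longleftrightarrow> s \<noteq> \<sigma> c"
  shows "{X \<in> sat_assignments V Q C vbl sat. \<forall>v\<in>V - {u}. h v (X v) = \<tau> v}
    = {X \<in> PiE V (fibre_domain u Q h \<tau>). \<forall>c\<in>C. restrict X (vbl c) \<noteq> \<sigma> c}"
proof -
  have pinned: "X \<in> PiE V Q \<and> (\<forall>v\<in>V - {u}. h v (X v) = \<tau> v) \<longleftrightarrow> X \<in> PiE V (fibre_domain u Q h \<tau>)" for X
    by (auto simp: PiE_iff fibre_domain_def)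
  have "sat c (restrict X (vbl c)) \<longleftrightarrow> restrict X (vbl c) \<noteq> \<sigma> c" if "X \<in> PiE V Q" "c \<in> C" for X c
  proof -
    have "restrict X (vbl c) \<in> PiE (vbl c) Q"
      using that vbl by (auto simp: restrict_PiE_iff PiE_iff)
    then show ?thesis
      using forbidden that(2) by blast
  qed
  then show ?thesis
    unfolding sat_assignments_def using pinned by blast
qed

lemma card_PiE_ge_if_entropy_criterion:
  assumes ent: "entropy_criterion V Q C vbl \<Sigma> h \<alpha> \<beta>" and c: "c \<in> C" "vbl c \<subseteq> V" "finite (vbl c)"
    and "0 < \<beta>" and "0 < K" and big: "(1 / \<beta>) * log 2 K \<le> (\<Sum>v\<in>vbl c. log 2 (card (Q v)))"
    and A: "\<And>v. v \<in> vbl c \<Longrightarrow> finite (A v) \<and> A v \<noteq> {}"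
    and fibre: "\<And>v. v \<in> vbl c \<Longrightarrow> \<exists>z\<in>\<Sigma> v. {x \<in> Q v. h v x = z} \<subseteq> A v"
  shows "K \<le> card (PiE (vbl c) A)"
proof -
  have log_floor_le: "log 2 (of_int \<lfloor>card (Q v) / card (\<Sigma> v)\<rfloor>) \<le> log 2 (card (A v))" if v: "v \<in> vbl c" for v
  proof -
    obtain z where z: "z \<in> \<Sigma> v" "{x \<in> Q v. h v x = z} \<subseteq> A v"
      using fibre[OF v] by blast
    then have "\<lfloor>card (Q v) / card (\<Sigma> v)\<rfloor> \<le> int (card {x \<in> Q v. h v x = z})"
      using ent v c(2) by (auto simp: entropy_criterion_def)
    also have "\<dots> \<le> int (card (A v))"
      using z(2) A[OF v] by (simp add: card_mono)
    finally have floor_le: "real_of_int \<lfloor>card (Q v) / card (\<Sigma> v)\<rfloor> \<le> card (A v)"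
      by linarith
    have card_pos: "0 < card (A v)"
      using A[OF v] by (simp add: card_gt_0_iff)
    show ?thesis
    proof (cases "\<lfloor>card (Q v) / card (\<Sigma> v)\<rfloor> = 0")
      case True
      then show ?thesis
        using card_pos by (simp add: log_def)
    next
      case False
      have "0 \<le> \<lfloor>card (Q v) / card (\<Sigma> v)\<rfloor>"
        by simp
      with False have "0 < real_of_int \<lfloor>card (Q v) / card (\<Sigma> v)\<rfloor>"
        by linarith
      then show ?thesis
        using floor_le by (rule log_mono[rotated]) simp
    qed
  qed
  have "log 2 K \<le> \<beta> * (\<Sum>v\<in>vbl c. log 2 (card (Q v)))"
    using big \<open>0 < \<beta>\<close> by (simp add: field_simps)
  also have "\<dots> \<le> (\<Sum>v\<in>vbl c. log 2 (of_int \<lfloor>card (Q v) / card (\<Sigma> v)\<rfloor>))"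
    using ent c(1) by (simp add: entropy_criterion_def)
  also have "\<dots> \<le> (\<Sum>v\<in>vbl c. log 2 (card (A v)))"
    using log_floor_le by (rule sum_mono)
  finally have "2 powr log 2 K \<le> 2 powr (\<Sum>v\<in>vbl c. log 2 (card (A v)))"
    by (rule powr_mono) simp
  then have "K \<le> 2 powr (\<Sum>v\<in>vbl c. log 2 (card (A v)))"
    using \<open>0 < K\<close> by simp
  also have "\<dots> = (\<Prod>v\<in>vbl c. real (card (A v)))"
    using A by (simp add: powr_sum card_gt_0_iff)
  also have "\<dots> = card (PiE (vbl c) A)"
    using c(3) by (simp add: card_PiE)
  finally show ?thesis .
qed

lemma dep_degree_le_max_dep_degree:
  "finite C \<Longrightarrow> c \<in> C \<Longrightarrow> dep_degree C vbl c \<le> max_dep_degree C vbl"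
  by (auto simp: max_dep_degree_def)

lemma pmf_cond_marginal_csp_mu_eq:
  fixes h :: "'v \<Rightarrow> 'a \<Rightarrow> 'b" and \<tau> :: "'v \<Rightarrow> 'b" and \<sigma> :: "'c \<Rightarrow> 'v \<Rightarrow> 'a"
  assumes csp: "csp_formula V Q C vbl" and u: "u \<in> V"
    and forbidden: "\<forall>c\<in>C. \<forall>s\<in>PiE (vbl c) Q. sat c s \<longleftrightarrow> s \<noteq> \<sigma> c"
    and satisfiable: "sat_assignments V Q C vbl sat \<noteq> {}"
    and feasible: "cond_event V u \<tau> \<inter> set_pmf (proj_nu V h (csp_mu V Q C vbl sat)) \<noteq> {}"
  defines "A \<equiv> {X \<in> PiE V (fibre_domain u Q h \<tau>). \<forall>c\<in>C. restrict X (vbl c) \<noteq> \<sigma> c}"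
  shows "A \<noteq> {}"
    and "pmf (cond_marginal V (proj_nu V h (csp_mu V Q C vbl sat)) u \<tau>) y
      = card {X \<in> A. X u \<in> {x \<in> Q u. h u x = y}} / card A"
proof -
  define SAT where "SAT = sat_assignments V Q C vbl sat"
  have "finite SAT"
    using csp by (auto simp: SAT_def sat_assignments_def csp_formula_def intro: finite_subset[OF _ finite_PiE])
  have A_eq: "A = {X \<in> SAT. \<forall>v\<in>V - {u}. h v (X v) = \<tau> v}"
    unfolding A_def SAT_def using csp forbidden
    by (intro pinned_sat_assignments_eq[symmetric]) (auto simp: csp_formula_def)
  show "A \<noteq> {}"
    using pinned_nonempty_if_feasible[OF \<open>finite SAT\<close>] feasible satisfiable
    by (simp add: A_eq SAT_def csp_mu_def)
  have "{X \<in> A. h u (X u) = y} = {X \<in> A. X u \<in> {x \<in> Q u. h u x = y}}"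
    using u by (auto simp: A_def fibre_domain_def PiE_iff)
  then show "pmf (cond_marginal V (proj_nu V h (csp_mu V Q C vbl sat)) u \<tau>) y
      = card {X \<in> A. X u \<in> {x \<in> Q u. h u x = y}} / card A"
    using pmf_cond_marginal_proj_nu_uniform[OF \<open>finite SAT\<close> u, of h \<tau> y] \<open>A \<noteq> {}\<close>
    by (simp add: A_eq SAT_def csp_mu_def)
qed

lemma fibre_domain_atomic_lll:
  assumes csp: "csp_formula V Q C vbl" and ent: "entropy_criterion V Q C vbl \<Sigma> h \<alpha> \<beta>" and "0 < \<beta>"
    and degree: "\<And>c. c \<in> C \<Longrightarrow> dep_degree C vbl c \<le> D" and "1 \<le> D"
    and big: "\<forall>c\<in>C. (\<Sum>v\<in>vbl c. log 2 (real (card (Q v))))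
                     \<ge> (1 / \<beta>) * log 2 (40 * exp 1 * real D ^ 2)"
    and tau: "\<forall>v\<in>V - {u}. \<tau> v \<in> \<Sigma> v" and y: "y \<in> \<Sigma> u"
    and nonempty: "\<And>v. v \<in> V \<Longrightarrow> fibre_domain u Q h \<tau> v \<noteq> {}"
  shows "atomic_lll V (fibre_domain u Q h \<tau>) C vbl (1 / (40 * exp 1 * real D ^ 2)) D"
proof -
  from csp have finV: "finite V" and finQ: "\<And>v. v \<in> V \<Longrightarrow> finite (Q v)"
    and vblV: "\<And>c. c \<in> C \<Longrightarrow> vbl c \<subseteq> V"
    unfolding csp_formula_def by auto
  have finite: "finite (fibre_domain u Q h \<tau> v)" if "v \<in> V" for v
    using finQ[OF that] by (auto simp: fibre_domain_def)
  have "40 * exp 1 * real D ^ 2 \<le> card (PiE (vbl c) (fibre_domain u Q h \<tau>))" if c: "c \<in> C" for c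
  proof (rule card_PiE_ge_if_entropy_criterion[OF ent c vblV[OF c]])
    show "\<exists>z\<in>\<Sigma> v. {x \<in> Q v. h v x = z} \<subseteq> fibre_domain u Q h \<tau> v" if "v \<in> vbl c" for v
      using that vblV[OF c] tau y by (cases "v = u") (auto simp: fibre_domain_def)
  qed (use vblV c finV finite nonempty \<open>1 \<le> D\<close> \<open>0 < \<beta>\<close> big in \<open>auto intro: finite_subset\<close>)
  then show ?thesis
    using csp degree lll_parameter_bounds(1)[OF \<open>1 \<le> D\<close>] finite \<open>1 \<le> D\<close>
    by unfold_locales (auto simp: csp_formula_def field_simps)
qed

theorem lemma7p7:
  fixes V :: "'v set" and Q :: "'v \<Rightarrow> 'a set" and C :: "'c set"
    and vbl :: "'c \<Rightarrow> 'v set" and sat :: "'c \<Rightarrow> ('v \<Rightarrow> 'a) \<Rightarrow> bool"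
    and \<Sigma> :: "'v \<Rightarrow> 'b set" and h :: "'v \<Rightarrow> 'a \<Rightarrow> 'b"
    and \<alpha> \<beta> :: real and D :: nat
    and u :: 'v and \<tau> :: "'v \<Rightarrow> 'b" and y :: 'b
  assumes csp: "csp_formula V Q C vbl"
    and atomic: "\<forall>c\<in>C. atomic_constraint Q (vbl c) (sat c)"
    and satisfiable: "sat_assignments V Q C vbl sat \<noteq> {}"
    and proj: "projection_scheme V Q \<Sigma> h"
    and ent: "entropy_criterion V Q C vbl \<Sigma> h \<alpha> \<beta>"
    and ab: "0 < \<beta>" "\<beta> < \<alpha>" "\<alpha> < 1"
    and D_def: "D = max_dep_degree C vbl"
    and D_pos: "D \<ge> 1"
    and big: "\<forall>c\<in>C. (\<Sum>v\<in>vbl c. log 2 (real (card (Q v))))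
                     \<ge> (1 / \<beta>) * log 2 (40 * exp 1 * real D ^ 2)"
    and u: "u \<in> V"
    and tau: "\<forall>v\<in>V - {u}. \<tau> v \<in> \<Sigma> v"
    and y: "y \<in> \<Sigma> u"
    and feasible: "cond_event V u \<tau> \<inter> set_pmf (proj_nu V h (csp_mu V Q C vbl sat)) \<noteq> {}"
  shows "pmf (cond_marginal V (proj_nu V h (csp_mu V Q C vbl sat)) u \<tau>) y
           \<le> real_of_int \<lceil>real (card (Q u)) / real (card (\<Sigma> u))\<rceil> / real (card (Q u))
             * exp (1 / (20 * real D))"
proof -
  obtain \<sigma> where \<sigma>: "\<forall>c\<in>C. \<forall>s\<in>PiE (vbl c) Q. sat c s \<longleftrightarrow> s \<noteq> \<sigma> c"
    using bchoice[OF atomic[unfolded atomic_constraint_iff_forbidden Bex_def]] by blast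
  define A where "A = {X \<in> PiE V (fibre_domain u Q h \<tau>). \<forall>c\<in>C. restrict X (vbl c) \<noteq> \<sigma> c}"
  define Y where "Y = {x \<in> Q u. h u x = y}"
  define p where "p = 1 / (40 * exp 1 * real D ^ 2)"
  note A_nonempty = pmf_cond_marginal_csp_mu_eq(1)[OF csp u \<sigma> satisfiable feasible, folded A_def]
  interpret atomic_lll V "fibre_domain u Q h \<tau>" C vbl \<sigma> p D
    unfolding p_def using csp ent ab(1) D_pos big tau y A_nonempty
    by (intro fibre_domain_atomic_lll)
      (auto simp: D_def dep_degree_le_max_dep_degree csp_formula_def A_def PiE_eq_empty_iff)
  have "avoiding C = A"
    by (simp add: avoiding_def violates_def A_def)
  note pmf_cond_marginal_csp_mu_eq(2)[OF csp u \<sigma> satisfiable feasible, of y, folded A_def Y_def]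
  also have "card {X \<in> A. X u \<in> Y} / card A \<le> card Y / card (Q u) / (1 - 2 * p * (real D + 1))"
    using avoiding_value_ratio_le[OF u, of Y] lll_parameter_bounds(2)[OF D_pos] A_nonempty
    by (simp add: \<open>avoiding C = A\<close> Y_def fibre_domain_def p_def)
  also have "\<dots> = card Y / card (Q u) * (1 / (1 - 2 * p * (real D + 1)))"
    by simp
  also have "\<dots> \<le> real_of_int \<lceil>real (card (Q u)) / real (card (\<Sigma> u))\<rceil> / card (Q u) * exp (1 / (20 * real D))"
  proof -
    have "card Y \<le> \<lceil>real (card (Q u)) / real (card (\<Sigma> u))\<rceil>"
      using ent u y by (simp add: entropy_criterion_def Y_def)
    then have "0 \<le> real_of_int \<lceil>real (card (Q u)) / real (card (\<Sigma> u))\<rceil>"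
      by linarith
    then show ?thesis
      using \<open>card Y \<le> \<lceil>real (card (Q u)) / real (card (\<Sigma> u))\<rceil>\<close> lll_parameter_bounds[OF D_pos]
      by (intro mult_mono divide_right_mono) (auto simp: p_def)
  qed
  finally show ?thesis .
qed

end
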